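(* Let $(a_n)_{n\ge1}$ be a non-negative sequence and define $b_n = \sum_{l=1}^n 2^{l-n}a_l$. If $\sum_{n=1}^\infty a_n < +\infty$, then $\liminf_{n\to\infty} n b_n = 0$. *)

theory Defs
  imports "HOL-Analysis.Analysis"
begin

end

theory Submission
  imports Defs
begin

(* With b n = sum_{l=1..n} 2^(l-n) a l one has b (n+1) = b n / 2 + a (n+1); summing this
   gives sum_{n<=N} b n <= 2 sum_n a n, so b is summable. A non-negative summable sequence
   cannot eventually exceed c/n for a fixed c > 0, as the harmonic series diverges;
   hence liminf n b n = 0. *)

definition halving_sum :: "(nat \<Rightarrow> real) \<Rightarrow> nat \<Rightarrow> real" where
  "halving_sum a n = (\<Sum>l=1..n. (2::real) powr (real l - real n) * a l)"

lemma halving_sum_0 [simp]: "halving_sum a 0 = 0"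
  by (simp add: halving_sum_def)

lemma halving_sum_Suc: "halving_sum a (Suc n) = halving_sum a n / 2 + a (Suc n)"
proof -
  have "(\<Sum>l=1..n. (2::real) powr (real l - real (Suc n)) * a l)
      = (\<Sum>l=1..n. 2 powr (real l - real n) * a l) / 2"
    unfolding sum_divide_distrib by (rule sum.cong) (simp_all add: powr_diff powr_add)
  then show ?thesis
    by (simp add: halving_sum_def)
qed

lemma halving_sum_nonneg:
  assumes "\<And>n. n \<ge> 1 \<Longrightarrow> a n \<ge> 0"
  shows "halving_sum a n \<ge> 0"
  unfolding halving_sum_def by (intro sum_nonneg mult_nonneg_nonneg assms) auto

lemma sum_halving_sum_atMost:
  "sum (halving_sum a) {..N} + halving_sum a N = 2 * (\<Sum>i<N. a (Suc i))"
  by (induction N) (simp_all add: halving_sum_Suc)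

lemma summable_halving_sum:
  assumes nonneg: "\<And>n. n \<ge> 1 \<Longrightarrow> a n \<ge> 0"
    and summ: "summable (\<lambda>n. a (Suc n))"
  shows "summable (halving_sum a)"
proof -
  have hs_nonneg: "halving_sum a n \<ge> 0" for n
    by (rule halving_sum_nonneg) (rule nonneg)
  show ?thesis
  proof (rule summableI_nonneg_bounded[where x = "2 * suminf (\<lambda>n. a (Suc n))"])
    fix n
    have "(\<Sum>i<n. halving_sum a i) \<le> sum (halving_sum a) {..n}"
      by (intro sum_mono2) (auto intro: hs_nonneg)
    also have "\<dots> \<le> 2 * (\<Sum>i<n. a (Suc i))"
      using sum_halving_sum_atMost[where a=a and N=n] hs_nonneg[of n] by linarith
    also have "\<dots> \<le> 2 * suminf (\<lambda>n. a (Suc n))"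
      by (simp add: sum_le_suminf[OF summ] nonneg)
    finally show "(\<Sum>i<n. halving_sum a i) \<le> 2 * suminf (\<lambda>n. a (Suc n))" .
  qed (rule hs_nonneg)
qed

lemma summable_not_eventually_gt_inverse:
  fixes f :: "nat \<Rightarrow> real"
  assumes "summable f" and "c > 0"
  shows "\<not> eventually (\<lambda>n. c < real n * f n) sequentially"
proof
  assume "eventually (\<lambda>n. c < real n * f n) sequentially"
  then obtain N where N: "\<And>n. n \<ge> N \<Longrightarrow> c < real n * f n"
    unfolding eventually_sequentially by auto
  have "summable (\<lambda>n. c * inverse (real n))"
  proof (rule summable_comparison_test'[OF \<open>summable f\<close>, of "Suc N"])
    fix n assume "Suc N \<le> n"
    then have "real n > 0" and "c < real n * f n"
      using N[of n] by auto
    then show "norm (c * inverse (real n)) \<le> f n"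
      using \<open>c > 0\<close> by (simp add: field_simps)
  qed
  then have "summable (\<lambda>n. inverse c * (c * inverse (real n)))"
    by (rule summable_mult)
  then have "summable (\<lambda>n. inverse (real n))"
    using \<open>c > 0\<close> by simp
  then show False
    using not_summable_harmonic[where 'a=real] by simp
qed

lemma liminf_real_mult_summable_eq_0:
  fixes f :: "nat \<Rightarrow> real"
  assumes nonneg: "\<And>n. f n \<ge> 0" and "summable f"
  shows "liminf (\<lambda>n. ereal (real n * f n)) = 0"
proof (rule antisym)
  show "liminf (\<lambda>n. ereal (real n * f n)) \<le> 0"
  proof (rule ccontr)
    assume "\<not> ?thesis"
    then obtain c :: real where "0 < c" "ereal c < liminf (\<lambda>n. ereal (real n * f n))"
      using ereal_dense2[of 0] by (metis ereal_less(2) leI less_ereal.simps(1))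
    then have "eventually (\<lambda>n. c < real n * f n) sequentially"
      using less_LiminfD by fastforce
    with summable_not_eventually_gt_inverse[OF \<open>summable f\<close> \<open>0 < c\<close>] show False ..
  qed
  show "0 \<le> liminf (\<lambda>n. ereal (real n * f n))"
    by (rule Liminf_bounded) (simp add: nonneg)
qed

theorem lemma7:
  fixes a :: "nat \<Rightarrow> real"
  assumes nonneg: "\<And>n. n \<ge> 1 \<Longrightarrow> a n \<ge> 0"
    and summ: "summable (\<lambda>n. a (Suc n))"
  shows "liminf (\<lambda>n. ereal (real n * (\<Sum>l=1..n. (2::real) powr (real l - real n) * a l))) = 0"
  using liminf_real_mult_summable_eq_0[OF halving_sum_nonneg[of a, OF nonneg]
      summable_halving_sum[OF nonneg summ]]
  by (simp add: halving_sum_def)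

end
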